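(* Let $f\in K[z]$ be a polynomial of degree at least $2$ and let $\mu$ be an $f$-invariant Radon probability measure on $J(f)$. If $\log_p f^\#$ is $\mu$-integrable, then $$L(f,\mu)=\int_{\mathsf{P}^1}\log_p\|f'\|_\xi\,d\mu(\xi).$$
   Context: $K$ is an algebraically closed field of characteristic $0$, complete with respect to a nontrivial nonarchimedean absolute value. Set $p=\mathrm{res.char}(K)$ if positive and $p=e$ otherwise; $\log_p$ is the logarithm to base $p$. $\mathsf{P}^1$ is the Berkovich projective line over $K$, $\mathsf{A}^1=\mathsf{P}^1\setminus\{\infty\}$; $\|g\|_\xi$ is the value at $g\in K[z]$ of the seminorm $\xi\in\mathsf{A}^1$. $\mathcal{K}(f)$ is the set of $\xi\in\mathsf{A}^1$ with $f^n(\xi)\not\to\infty$, $J(f)=\partial\mathcal{K}(f)$. The chordal derivative is $f^\#(\xi)=\frac{\max(1,\|z\|_\xi)^2}{\max(1,\|f\|_\xi)^2}\|f'\|_\xi$, and $L(f,\mu)=\int\log_p f^\#\,d\mu$. *)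

theory Defs
  imports "HOL-Analysis.Analysis" "HOL-Probability.Probability"
    "HOL-Computational_Algebra.Polynomial"
begin

definition nonarch_abs :: "('k::field_char_0 \<Rightarrow> real) \<Rightarrow> bool" where
  "nonarch_abs absv \<longleftrightarrow>
     (\<forall>x. absv x \<ge> 0) \<and> (\<forall>x. absv x = 0 \<longleftrightarrow> x = 0) \<and>
     (\<forall>x y. absv (x * y) = absv x * absv y) \<and>
     (\<forall>x y. absv (x + y) \<le> max (absv x) (absv y))"

definition nontrivial_abs :: "('k::field_char_0 \<Rightarrow> real) \<Rightarrow> bool" where
  "nontrivial_abs absv \<longleftrightarrow> (\<exists>x. x \<noteq> 0 \<and> absv x \<noteq> 1)"

definition complete_abs :: "('k::field_char_0 \<Rightarrow> real) \<Rightarrow> bool" where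
  "complete_abs absv \<longleftrightarrow>
     (\<forall>X::nat \<Rightarrow> 'k. (\<forall>e>0. \<exists>N. \<forall>m\<ge>N. \<forall>n\<ge>N. absv (X m - X n) < e) \<longrightarrow>
        (\<exists>L. \<forall>e>0. \<exists>N. \<forall>n\<ge>N. absv (X n - L) < e))"

definition alg_closed :: "'k::field itself \<Rightarrow> bool" where
  "alg_closed _ \<longleftrightarrow> (\<forall>q::'k poly. degree q \<ge> 1 \<longrightarrow> (\<exists>x. poly q x = 0))"

text \<open>p = residue characteristic if positive, and e otherwise.  The residue field
  has positive characteristic n iff absv (of_nat n) < 1 for some n > 0; the
  characteristic is then the least such n.\<close>

definition res_p :: "('k::field_char_0 \<Rightarrow> real) \<Rightarrow> real" where
  "res_p absv = (if \<exists>n::nat. n > 0 \<and> absv (of_nat n) < 1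
                 then real (LEAST n::nat. n > 0 \<and> absv (of_nat n) < 1)
                 else exp 1)"

definition berkA1 :: "('k::field_char_0 \<Rightarrow> real) \<Rightarrow> ('k poly \<Rightarrow> real) set" where
  "berkA1 absv = {s. (\<forall>g. s g \<ge> 0) \<and>
                     (\<forall>g h. s (g + h) \<le> s g + s h) \<and>
                     (\<forall>g h. s (g * h) = s g * s h) \<and>
                     (\<forall>c. s [:c:] = absv c)}"

definition berkA1_top :: "('k::field_char_0 \<Rightarrow> real) \<Rightarrow> ('k poly \<Rightarrow> real) topology" where
  "berkA1_top absv = topology_generated_by
     {{s \<in> berkA1 absv. s g \<in> U} | g U. open U}"

text \<open>Points of P^1 = A^1 \<union> {\<infinity>}: Some s for s in A^1, None for \<infinity>.
  Topology: one-point compactification of A^1.\<close>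

type_synonym 'k berk = "('k poly \<Rightarrow> real) option"

definition berkP1 :: "('k::field_char_0 \<Rightarrow> real) \<Rightarrow> 'k berk set" where
  "berkP1 absv = insert None (Some ` berkA1 absv)"

definition berkP1_top :: "('k::field_char_0 \<Rightarrow> real) \<Rightarrow> 'k berk topology" where
  "berkP1_top absv = topology_generated_by
     ({Some ` U | U. openin (berkA1_top absv) U} \<union>
      {insert None (Some ` (berkA1 absv - C)) | C. compactin (berkA1_top absv) C})"

text \<open>Value \<parallel>g\<parallel>_\<xi> (only meaningful for \<xi> \<in> A^1; junk value 0 at \<infinity>).\<close>

definition bnorm :: "'k::field_char_0 berk \<Rightarrow> 'k poly \<Rightarrow> real" where
  "bnorm \<xi> g = (case \<xi> of Some s \<Rightarrow> s g | None \<Rightarrow> 0)"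

definition berk_map :: "'k::field_char_0 poly \<Rightarrow> 'k berk \<Rightarrow> 'k berk" where
  "berk_map f \<xi> = (case \<xi> of Some s \<Rightarrow> Some (\<lambda>g. s (pcompose g f)) | None \<Rightarrow> None)"

definition filled_julia ::
  "('k::field_char_0 \<Rightarrow> real) \<Rightarrow> 'k poly \<Rightarrow> 'k berk set" where
  "filled_julia absv f = {\<xi> \<in> Some ` berkA1 absv.
      \<not> limitin (berkP1_top absv) (\<lambda>n. (berk_map f ^^ n) \<xi>) None sequentially}"

definition julia :: "('k::field_char_0 \<Rightarrow> real) \<Rightarrow> 'k poly \<Rightarrow> 'k berk set" where
  "julia absv f = (berkP1_top absv) frontier_of (filled_julia absv f)"

text \<open>Chordal derivative f^# on A^1 (junk value 0 at \<infinity>).\<close>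

definition chordal_deriv :: "'k::field_char_0 poly \<Rightarrow> 'k berk \<Rightarrow> real" where
  "chordal_deriv f \<xi> =
     (case \<xi> of None \<Rightarrow> 0
      | Some s \<Rightarrow> (max 1 (s [:0, 1:]))\<^sup>2 / (max 1 (s f))\<^sup>2 * s (pderiv f))"

definition borel_sets_of :: "'a topology \<Rightarrow> 'a set set" where
  "borel_sets_of X = sigma_sets (topspace X) {U. openin X U}"

definition radon_prob :: "'a topology \<Rightarrow> 'a measure \<Rightarrow> bool" where
  "radon_prob X \<mu> \<longleftrightarrow> prob_space \<mu> \<and> space \<mu> = topspace X \<and>
     sets \<mu> = borel_sets_of X \<and>
     (\<forall>A \<in> sets \<mu>. emeasure \<mu> A =
        (SUP C \<in> {C. compactin X C \<and> C \<subseteq> A}. emeasure \<mu> C))"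

definition invariant_measure :: "('a \<Rightarrow> 'a) \<Rightarrow> 'a measure \<Rightarrow> bool" where
  "invariant_measure F \<mu> \<longleftrightarrow>
     (\<forall>A \<in> sets \<mu>. emeasure \<mu> (F -` A \<inter> space \<mu>) = emeasure \<mu> A)"

end

theory Submission
  imports Defs
begin

(* Where f^# > 0 one has log f^# = 2 log^+ ||z|| - 2 log^+ ||f|| + log ||f'||, and ||z|| at f(xi)
   equals ||f|| at xi, so invariance of mu makes the two middle terms cancel after integration,
   provided log^+ ||z|| is integrable.  Integrability comes from the growth estimates
   ||f'|| <= A max(1, ||z||)^(d-1) and max(1, ||f||) >= B max(1, ||z||)^d, which give
   f^# max(1, ||z||)^(d-1) <= A / B^2 and hence 0 <= log^+ ||z|| <= log (A / B^2) - log f^#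
   as soon as d >= 2. *)

lemma nonarch_absD:
  assumes "nonarch_abs absv"
  shows "absv x \<ge> 0" "absv x = 0 \<longleftrightarrow> x = 0" "absv (x * y) = absv x * absv y"
  using assms unfolding nonarch_abs_def by auto

lemma nonarch_abs_1:
  assumes "nonarch_abs absv"
  shows "absv 1 = 1"
proof -
  have "absv 1 = absv 1 * absv 1" using nonarch_absD(3)[OF assms, of 1 1] by simp
  moreover have "absv 1 \<noteq> 0" using nonarch_absD(2)[OF assms] by simp
  ultimately show ?thesis by simp
qed

lemma nonarch_abs_minus:
  assumes "nonarch_abs absv"
  shows "absv (- x) = absv x"
proof -
  have "absv (- 1) ^ 2 = 1"
    using nonarch_absD(3)[OF assms, of "- 1" "- 1"] nonarch_abs_1[OF assms]
    by (simp add: power2_eq_square)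
  then have "absv (- 1) = 1"
    using nonarch_absD(1)[OF assms, of "- 1"] by (simp add: power2_eq_1_iff)
  then show ?thesis using nonarch_absD(3)[OF assms, of "- 1" x] by simp
qed

lemma res_p_gt_1:
  assumes "nonarch_abs absv"
  shows "res_p absv > 1"
proof (cases "\<exists>n::nat. n > 0 \<and> absv (of_nat n) < 1")
  case True
  let ?n = "LEAST n::nat. n > 0 \<and> absv (of_nat n) < 1"
  have "?n > 0" "absv (of_nat ?n) < 1" using LeastI_ex[OF True] by auto
  then have "?n \<ge> 2" using nonarch_abs_1[OF assms] by (cases "?n = 1") auto
  then show ?thesis using True by (simp add: res_p_def)
next
  case False
  then have "res_p absv = exp 1" unfolding res_p_def by (simp only: if_False)
  then show ?thesis by simp
qed

lemma berkA1D:
  assumes "s \<in> berkA1 absv"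
  shows "s g \<ge> 0" "s (g + h) \<le> s g + s h" "s (g * h) = s g * s h" "s [:c:] = absv c"
  using assms unfolding berkA1_def by auto

lemma berkA1_0:
  assumes "nonarch_abs absv" "s \<in> berkA1 absv"
  shows "s 0 = 0"
  using berkA1D(4)[OF assms(2), of 0] nonarch_absD(2)[OF assms(1)] by simp

lemma berkA1_power:
  assumes "nonarch_abs absv" "s \<in> berkA1 absv"
  shows "s (p ^ i) = s p ^ i"
proof (induction i)
  case 0
  show ?case using berkA1D(4)[OF assms(2), of 1] nonarch_abs_1[OF assms(1)] by (simp add: one_pCons)
qed (simp add: berkA1D(3)[OF assms(2)])

lemma berkA1_monom:
  assumes "nonarch_abs absv" "s \<in> berkA1 absv"
  shows "s (monom c i) = absv c * s [:0, 1:] ^ i"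
proof -
  have "monom c i = [:c:] * [:0, 1:] ^ i" by (simp add: monom_altdef)
  then show ?thesis by (simp only: berkA1D(3,4)[OF assms(2)] berkA1_power[OF assms])
qed

lemma berkA1_uminus:
  assumes "nonarch_abs absv" "s \<in> berkA1 absv"
  shows "s (- g) = s g"
proof -
  have "- g = [:- 1:] * g" by simp
  then show ?thesis by (simp only: berkA1D(3,4)[OF assms(2)] nonarch_abs_minus[OF assms(1)]
        nonarch_abs_1[OF assms(1)] mult_1)
qed

lemma berkA1_sum_le:
  assumes "nonarch_abs absv" "s \<in> berkA1 absv"
  shows "s (\<Sum>i\<in>I. g i) \<le> (\<Sum>i\<in>I. s (g i))"
proof (induction I rule: infinite_finite_induct)
  case (insert i I)
  then show ?case using berkA1D(2)[OF assms(2), of "g i" "sum g I"] by simp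
qed (simp_all add: berkA1_0[OF assms])

lemma berkA1_le_coeff_sum:
  assumes "nonarch_abs absv" "s \<in> berkA1 absv" "degree p \<le> D"
  shows "s p \<le> (\<Sum>i\<le>D. absv (coeff p i)) * max 1 (s [:0, 1:]) ^ D"
proof -
  let ?m = "max 1 (s [:0, 1:])"
  have "s p \<le> (\<Sum>i\<le>D. s (monom (coeff p i) i))"
    using berkA1_sum_le[OF assms(1,2)] by (subst poly_as_sum_of_monoms'[OF assms(3), symmetric])
  also have "\<dots> \<le> (\<Sum>i\<le>D. absv (coeff p i) * ?m ^ D)"
  proof (rule sum_mono)
    fix i assume "i \<in> {..D}"
    have "s [:0, 1:] ^ i \<le> ?m ^ i" by (rule power_mono) (simp_all add: berkA1D(1)[OF assms(2)])
    also have "\<dots> \<le> ?m ^ D" using \<open>i \<in> {..D}\<close> by (intro power_increasing) simp_all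
    finally have "s [:0, 1:] ^ i \<le> ?m ^ D" .
    then show "s (monom (coeff p i) i) \<le> absv (coeff p i) * ?m ^ D"
      by (simp add: berkA1_monom[OF assms(1,2)] mult_left_mono nonarch_absD(1)[OF assms(1)])
  qed
  finally show ?thesis by (simp add: sum_distrib_right)
qed

lemma berkA1_lead_term_le:
  assumes "nonarch_abs absv" "s \<in> berkA1 absv" "degree f = n" "n \<ge> 1"
  shows "absv (lead_coeff f) * s [:0, 1:] ^ n
    \<le> s f + (\<Sum>i\<le>n - 1. absv (coeff f i)) * max 1 (s [:0, 1:]) ^ (n - 1)"
proof -
  define g where "g = f - monom (lead_coeff f) n"
  have coeff_g: "coeff g i = (if i = n then 0 else coeff f i)" for i
    using assms(3) by (simp add: g_def coeff_monom)
  have "degree g \<le> n - 1"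
  proof (rule degree_le, intro allI impI)
    fix i assume "n - 1 < i"
    then show "coeff g i = 0" using coeff_g assms(3) by (cases "i = n") (auto intro: coeff_eq_0)
  qed
  moreover have "(\<Sum>i\<le>n - 1. absv (coeff g i)) = (\<Sum>i\<le>n - 1. absv (coeff f i))"
    using coeff_g assms(4) by (intro sum.cong) auto
  ultimately have g_le: "s g \<le> (\<Sum>i\<le>n - 1. absv (coeff f i)) * max 1 (s [:0, 1:]) ^ (n - 1)"
    using berkA1_le_coeff_sum[OF assms(1,2)] by metis
  have "s (monom (lead_coeff f) n) \<le> s f + s (- g)"
    using berkA1D(2)[OF assms(2), of f "- g"] by (simp add: g_def)
  then show ?thesis
    using g_le by (simp add: berkA1_uminus[OF assms(1,2)] berkA1_monom[OF assms(1,2)])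
qed

lemma berkA1_growth_upper:
  assumes "nonarch_abs absv" "degree p \<le> D"
  shows "\<exists>A>0. \<forall>s\<in>berkA1 absv. s p \<le> A * max 1 (s [:0, 1:]) ^ D"
proof (intro exI conjI ballI)
  let ?S = "\<Sum>i\<le>D. absv (coeff p i)"
  show "?S + 1 > 0" by (simp add: add_nonneg_pos nonarch_absD(1)[OF assms(1)] sum_nonneg)
  fix s assume s: "s \<in> berkA1 absv"
  have "s p \<le> ?S * max 1 (s [:0, 1:]) ^ D" by (rule berkA1_le_coeff_sum[OF assms(1) s assms(2)])
  also have "\<dots> \<le> (?S + 1) * max 1 (s [:0, 1:]) ^ D" by (intro mult_right_mono) simp_all
  finally show "s p \<le> (?S + 1) * max 1 (s [:0, 1:]) ^ D" .
qed

lemma berkA1_growth_lower: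
  assumes "nonarch_abs absv" "f \<noteq> 0"
  shows "\<exists>B>0. \<forall>s\<in>berkA1 absv. B * max 1 (s [:0, 1:]) ^ degree f \<le> max 1 (s f)"
proof (cases "degree f = 0")
  case True
  then show ?thesis by (intro exI[of _ 1]) simp
next
  case False
  define n where "n = degree f"
  define a where "a = absv (lead_coeff f)"
  define S where "S = (\<Sum>i\<le>n - 1. absv (coeff f i))"
  define R where "R = max 1 (2 * S / a)"
  define B where "B = min (a / 2) (1 / R ^ n)"
  have n: "n \<ge> 1" using False by (simp add: n_def)
  have a: "a > 0" using assms nonarch_absD[OF assms(1)] by (simp add: a_def order_le_neq_trans)
  have R: "R \<ge> 1" by (simp add: R_def)
  show ?thesis
  proof (intro exI conjI ballI)
    show "B > 0" using a R by (simp add: B_def)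
    fix s assume s: "s \<in> berkA1 absv"
    let ?t = "s [:0, 1:]" and ?m = "max 1 (s [:0, 1:])"
    have t: "?t \<ge> 0" by (rule berkA1D(1)[OF s])
    \<comment> \<open>Beyond R the leading monomial dominates the other terms; below R the bound 1 suffices.\<close>
    show "B * ?m ^ degree f \<le> max 1 (s f)"
    proof (cases "?t \<ge> R")
      case True
      then have m: "?m = ?t" using R by simp
      have "S \<le> a * ?t / 2" using True a by (simp add: R_def field_simps)
      then have "S * ?t ^ (n - 1) \<le> a * ?t / 2 * ?t ^ (n - 1)"
        using t by (intro mult_right_mono) simp_all
      also have "\<dots> = a * ?t ^ n / 2" using n by (simp add: power_eq_if)
      finally have "a / 2 * ?t ^ n \<le> s f"
        using berkA1_lead_term_le[OF assms(1) s n_def[symmetric] n] m by (simp add: a_def S_def)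
      moreover have "B * ?t ^ n \<le> a / 2 * ?t ^ n"
        using t by (intro mult_right_mono) (simp_all add: B_def)
      ultimately have "B * ?t ^ n \<le> s f" by linarith
      then show ?thesis using m by (simp add: n_def le_max_iff_disj)
    next
      case False
      then have "?m ^ n \<le> R ^ n" using R by (intro power_mono) simp_all
      moreover have "B \<le> 1 / R ^ n" by (simp add: B_def)
      ultimately have "B * ?m ^ n \<le> 1 / R ^ n * R ^ n" using a R by (intro mult_mono) simp_all
      then show ?thesis using R by (simp add: n_def)
    qed
  qed
qed

lemma chordal_deriv_decay:
  assumes "nonarch_abs absv" "degree f \<ge> 1"
  shows "\<exists>C>0. \<forall>s\<in>berkA1 absv.
    chordal_deriv f (Some s) * max 1 (s [:0, 1:]) ^ (degree f - 1) \<le> C"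
proof -
  define n where "n = degree f"
  have "degree (pderiv f) \<le> n - 1" by (simp add: n_def degree_pderiv)
  then obtain A where A: "A > 0"
    and upper: "\<forall>s\<in>berkA1 absv. s (pderiv f) \<le> A * max 1 (s [:0, 1:]) ^ (n - 1)"
    using berkA1_growth_upper[OF assms(1)] by blast
  have "f \<noteq> 0" using assms(2) by auto
  then obtain B where B: "B > 0"
    and lower: "\<forall>s\<in>berkA1 absv. B * max 1 (s [:0, 1:]) ^ n \<le> max 1 (s f)"
    using berkA1_growth_lower[OF assms(1)] unfolding n_def by blast
  show ?thesis
  proof (intro exI conjI ballI)
    show "A / B ^ 2 > 0" using A B by simp
    fix s assume s: "s \<in> berkA1 absv"
    define m where "m = max 1 (s [:0, 1:])"
    define M where "M = max 1 (s f)"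
    have m: "m \<ge> 1" and M: "M \<ge> 1" by (simp_all add: m_def M_def)
    have "m ^ n = m * m ^ (n - 1)" using assms(2) by (simp add: n_def power_eq_if)
    then have mn: "(m ^ n) ^ 2 = m ^ 2 * (m ^ (n - 1) * m ^ (n - 1))" by (simp add: power2_eq_square)
    have "s (pderiv f) \<le> A * m ^ (n - 1)" using upper s by (simp add: m_def)
    then have "s (pderiv f) * m ^ (n - 1) \<le> A * m ^ (n - 1) * m ^ (n - 1)"
      using m by (intro mult_right_mono) simp_all
    then have "m ^ 2 * (s (pderiv f) * m ^ (n - 1)) \<le> m ^ 2 * (A * m ^ (n - 1) * m ^ (n - 1))"
      by (rule mult_left_mono) simp
    then have q: "m ^ 2 * (s (pderiv f) * m ^ (n - 1)) \<le> A * (m ^ n) ^ 2"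
      by (simp add: mn ac_simps)
    have BM: "(B * m ^ n) ^ 2 \<le> M ^ 2"
      using lower s B m by (intro power_mono) (simp_all add: m_def M_def)
    have "chordal_deriv f (Some s) * m ^ (n - 1) = m ^ 2 * (s (pderiv f) * m ^ (n - 1)) / M ^ 2"
      by (simp add: chordal_deriv_def m_def M_def)
    also have "\<dots> \<le> A * (m ^ n) ^ 2 / M ^ 2"
      using q by (intro divide_right_mono) simp_all
    also have "\<dots> \<le> A * (m ^ n) ^ 2 / (B * m ^ n) ^ 2"
      using A B m M BM by (intro divide_left_mono mult_pos_pos zero_less_power) simp_all
    also have "\<dots> = A / B ^ 2" using m by (simp add: power_mult_distrib)
    finally show "chordal_deriv f (Some s) * max 1 (s [:0, 1:]) ^ (degree f - 1) \<le> A / B ^ 2"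
      by (simp add: m_def n_def)
  qed
qed

definition log_plus :: "real \<Rightarrow> real \<Rightarrow> real" where
  "log_plus b x = log b (max 1 x)"

lemma borel_measurable_log_plus [measurable]:
  "g \<in> borel_measurable M \<Longrightarrow> (\<lambda>x. log_plus b (g x)) \<in> borel_measurable M"
  unfolding log_plus_def by (intro borel_measurable_log borel_measurable_max) auto

lemma log_plus_nonneg: "b > 1 \<Longrightarrow> log_plus b x \<ge> 0"
  by (simp add: log_plus_def)

lemma log_plus_le_of_mult_power_le:
  assumes "b > 1" "x > 0" "n \<ge> 1" "x * max 1 t ^ n \<le> C"
  shows "log_plus b t \<le> log b C - log b x"
proof -
  have "max 1 t > 0" by simp
  then have pos: "x * max 1 t ^ n > 0" using assms(2) by simp
  have "1 * log_plus b t \<le> n * log_plus b t"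
    using assms(3) log_plus_nonneg[OF assms(1)] by (intro mult_right_mono) simp_all
  also have "\<dots> = log b (x * max 1 t ^ n) - log b x"
    using assms(1,2) \<open>max 1 t > 0\<close> by (simp add: log_plus_def log_mult log_nat_power)
  also have "\<dots> \<le> log b C - log b x"
    using assms(1,4) pos by simp
  finally show ?thesis by simp
qed

lemma log_chordal_deriv_eq:
  assumes "b > 1" "chordal_deriv f \<xi> > 0"
  shows "log b (chordal_deriv f \<xi>)
    = 2 * log_plus b (bnorm \<xi> [:0, 1:]) - 2 * log_plus b (bnorm \<xi> f)
      + log b (bnorm \<xi> (pderiv f))"
proof -
  obtain s where \<xi>: "\<xi> = Some s" using assms(2) by (cases \<xi>) (simp_all add: chordal_deriv_def)
  define m where "m = max 1 (s [:0, 1:])"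
  define M where "M = max 1 (s f)"
  have ch: "chordal_deriv f \<xi> = m ^ 2 / M ^ 2 * s (pderiv f)"
    by (simp add: \<xi> chordal_deriv_def m_def M_def)
  have m: "m > 0" and M: "M > 0" by (simp_all add: m_def M_def)
  then have "s (pderiv f) > 0"
    using assms(2) ch by (simp add: zero_less_divide_iff zero_less_mult_iff)
  then have "log b (chordal_deriv f \<xi>) = 2 * log b m - 2 * log b M + log b (s (pderiv f))"
    using assms(1) m M by (simp add: ch log_mult log_divide log_nat_power)
  then show ?thesis by (simp add: \<xi> bnorm_def log_plus_def m_def M_def)
qed

lemma topspace_berkP1_top: "topspace (berkP1_top absv) = berkP1 absv"
proof -
  have A1: "U \<subseteq> berkA1 absv" if "openin (berkA1_top absv) U" for U
    using openin_subset[OF that] by (auto simp: berkA1_top_def)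
  have "compactin (berkA1_top absv) {}" by simp
  then have "insert None (Some ` (berkA1 absv - {})) \<subseteq> topspace (berkP1_top absv)"
    unfolding berkP1_top_def topology_generated_by_topspace by (intro Union_upper UnI2) blast
  moreover have "topspace (berkP1_top absv) \<subseteq> berkP1 absv"
    unfolding berkP1_top_def topology_generated_by_topspace berkP1_def using A1 by blast
  ultimately show ?thesis unfolding berkP1_def by blast
qed

lemma openin_berkP1_top_bnorm_greater:
  assumes "a \<ge> 0"
  shows "openin (berkP1_top absv) {\<xi> \<in> berkP1 absv. a < bnorm \<xi> g}"
proof -
  define U where "U = {s \<in> berkA1 absv. s g \<in> {a<..}}"
  have "U \<in> {{s \<in> berkA1 absv. s g \<in> V} | g V. open V}"
    unfolding U_def by (intro CollectI exI[of _ g] exI[of _ "{a<..}"]) simp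
  then have "openin (berkA1_top absv) U"
    unfolding berkA1_top_def by (rule topology_generated_by_Basis)
  then have "Some ` U \<in> {Some ` U | U. openin (berkA1_top absv) U}" by blast
  then have "openin (berkP1_top absv) (Some ` U)"
    unfolding berkP1_top_def by (intro topology_generated_by_Basis UnI1)
  moreover have "{\<xi> \<in> berkP1 absv. a < bnorm \<xi> g} = Some ` U"
  proof (rule set_eqI)
    fix \<xi> show "\<xi> \<in> {\<xi> \<in> berkP1 absv. a < bnorm \<xi> g} \<longleftrightarrow> \<xi> \<in> Some ` U"
      using assms by (cases \<xi>) (auto simp: berkP1_def U_def bnorm_def)
  qed
  ultimately show ?thesis by simp
qed

lemma borel_measurable_bnorm:
  assumes "space \<mu> = berkP1 absv" "sets \<mu> = borel_sets_of (berkP1_top absv)"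
  shows "(\<lambda>\<xi>. bnorm \<xi> g) \<in> borel_measurable \<mu>"
  unfolding borel_measurable_iff_greater
proof
  fix a :: real
  show "{\<xi> \<in> space \<mu>. a < bnorm \<xi> g} \<in> sets \<mu>"
  proof (cases "a \<ge> 0")
    case True
    then show ?thesis
      using openin_berkP1_top_bnorm_greater[OF True] assms
      by (auto simp: borel_sets_of_def intro: sigma_sets.Basic)
  next
    case False
    have "bnorm \<xi> g \<ge> 0" if "\<xi> \<in> space \<mu>" for \<xi>
      using that assms(1) by (auto simp: berkP1_def berkA1_def bnorm_def)
    then have "{\<xi> \<in> space \<mu>. a < bnorm \<xi> g} = space \<mu>" using False by force
    then show ?thesis by simp
  qed
qed

lemma berk_map_berkP1: "\<xi> \<in> berkP1 absv \<Longrightarrow> berk_map f \<xi> \<in> berkP1 absv"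
  by (auto simp: berkP1_def berk_map_def berkA1_def pcompose_add pcompose_mult)

lemma bnorm_berk_map_X: "bnorm (berk_map f \<xi>) [:0, 1:] = bnorm \<xi> f"
  by (cases \<xi>) (simp_all add: berk_map_def bnorm_def pcompose_pCons)

lemma invariant_measure_integral:
  fixes g :: "'a \<Rightarrow> real"
  assumes "invariant_measure F \<mu>" "F \<in> space \<mu> \<rightarrow> space \<mu>"
    and [measurable]: "g \<in> borel_measurable \<mu>" "(\<lambda>x. g (F x)) \<in> borel_measurable \<mu>"
    and "integrable \<mu> g"
  shows "integrable \<mu> (\<lambda>x. g (F x))" "(\<integral>x. g (F x) \<partial>\<mu>) = (\<integral>x. g x \<partial>\<mu>)"
proof -
  have distr_eq: "distr \<mu> borel (\<lambda>x. g (F x)) = distr \<mu> borel g"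
  proof (rule measure_eqI)
    fix A :: "real set" assume "A \<in> sets (distr \<mu> borel (\<lambda>x. g (F x)))"
    then have A: "A \<in> sets borel" by simp
    have "emeasure (distr \<mu> borel (\<lambda>x. g (F x))) A
        = emeasure \<mu> ((\<lambda>x. g (F x)) -` A \<inter> space \<mu>)"
      by (rule emeasure_distr[OF assms(4) A])
    also have "(\<lambda>x. g (F x)) -` A \<inter> space \<mu> = F -` (g -` A \<inter> space \<mu>) \<inter> space \<mu>"
      using assms(2) by auto
    also have "emeasure \<mu> \<dots> = emeasure \<mu> (g -` A \<inter> space \<mu>)"
      using assms(1) measurable_sets[OF assms(3) A] unfolding invariant_measure_def by blast
    also have "\<dots> = emeasure (distr \<mu> borel g) A"
      by (rule emeasure_distr[OF assms(3) A, symmetric])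
    finally show "emeasure (distr \<mu> borel (\<lambda>x. g (F x))) A = emeasure (distr \<mu> borel g) A" .
  qed simp
  have id: "(\<lambda>x::real. x) \<in> borel_measurable borel" by simp
  have "integrable (distr \<mu> borel g) (\<lambda>x. x)"
    using assms(5) by (simp add: integrable_distr_eq[OF assms(3) id])
  then show "integrable \<mu> (\<lambda>x. g (F x))"
    by (simp add: distr_eq[symmetric] integrable_distr_eq[OF assms(4) id])
  have "(\<integral>x. g (F x) \<partial>\<mu>) = integral\<^sup>L (distr \<mu> borel (\<lambda>x. g (F x))) (\<lambda>x. x)"
    by (simp add: integral_distr[OF assms(4) id])
  also have "\<dots> = (\<integral>x. g x \<partial>\<mu>)"
    by (simp add: distr_eq integral_distr[OF assms(3) id])
  finally show "(\<integral>x. g (F x) \<partial>\<mu>) = (\<integral>x. g x \<partial>\<mu>)" .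
qed

lemma integrable_log_plus_bnorm_X:
  assumes "nonarch_abs absv" "degree f \<ge> 2" "b > 1" "finite_measure \<mu>"
    and "space \<mu> = berkP1 absv" "sets \<mu> = borel_sets_of (berkP1_top absv)"
    and "AE \<xi> in \<mu>. chordal_deriv f \<xi> > 0"
    and "integrable \<mu> (\<lambda>\<xi>. log b (chordal_deriv f \<xi>))"
  shows "integrable \<mu> (\<lambda>\<xi>. log_plus b (bnorm \<xi> [:0, 1:]))"
proof -
  have "degree f \<ge> 1" "degree f - 1 \<ge> 1" using assms(2) by simp_all
  then obtain C where decay:
    "\<forall>s\<in>berkA1 absv. chordal_deriv f (Some s) * max 1 (s [:0, 1:]) ^ (degree f - 1) \<le> C"
    using chordal_deriv_decay[OF assms(1)] by blast
  have "AE \<xi> in \<mu>.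
      norm (log_plus b (bnorm \<xi> [:0, 1:])) \<le> norm (log b C - log b (chordal_deriv f \<xi>))"
    using assms(7) AE_space
  proof eventually_elim
    case (elim \<xi>)
    then obtain s where \<xi>: "\<xi> = Some s" and s: "s \<in> berkA1 absv"
      using assms(5) by (auto simp: berkP1_def chordal_deriv_def)
    have "log_plus b (bnorm \<xi> [:0, 1:]) \<le> log b C - log b (chordal_deriv f \<xi>)"
      using log_plus_le_of_mult_power_le[OF assms(3)] elim decay s \<open>degree f - 1 \<ge> 1\<close>
      by (simp add: \<xi> bnorm_def)
    then show ?case using log_plus_nonneg[OF assms(3)] by simp
  qed
  moreover have "integrable \<mu> (\<lambda>\<xi>. log b C - log b (chordal_deriv f \<xi>))"
    using assms(4,8) by (simp add: finite_measure.integrable_const)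
  moreover have "(\<lambda>\<xi>. log_plus b (bnorm \<xi> [:0, 1:])) \<in> borel_measurable \<mu>"
    using borel_measurable_bnorm[OF assms(5,6)] by measurable
  ultimately show ?thesis using Bochner_Integration.integrable_bound by blast
qed

theorem lemma4p1:
  fixes absv :: "'k::field_char_0 \<Rightarrow> real"
    and f :: "'k poly"
    and \<mu> :: "'k berk measure"
  assumes "nonarch_abs absv" and "nontrivial_abs absv" and "complete_abs absv"
    and "alg_closed TYPE('k)"
    and "degree f \<ge> 2"
    and "radon_prob (berkP1_top absv) \<mu>"
    and "invariant_measure (berk_map f) \<mu>"
    and "emeasure \<mu> (berkP1 absv - julia absv f) = 0"
    and "AE \<xi> in \<mu>. chordal_deriv f \<xi> > 0"
    and "integrable \<mu> (\<lambda>\<xi>. log (res_p absv) (chordal_deriv f \<xi>))"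
  shows "(\<integral>\<xi>. log (res_p absv) (chordal_deriv f \<xi>) \<partial>\<mu>) =
         (\<integral>\<xi>. log (res_p absv) (bnorm \<xi> (pderiv f)) \<partial>\<mu>)"
proof -
  define b where "b = res_p absv"
  define h :: "'k berk \<Rightarrow> real" where "h \<xi> = log_plus b (bnorm \<xi> [:0, 1:])" for \<xi>
  have b: "b > 1" using res_p_gt_1[OF assms(1)] by (simp add: b_def)
  interpret prob_space \<mu> using assms(6) by (simp add: radon_prob_def)
  have space: "space \<mu> = berkP1 absv" and sets: "sets \<mu> = borel_sets_of (berkP1_top absv)"
    using assms(6) by (simp_all add: radon_prob_def topspace_berkP1_top)
  have [measurable]: "(\<lambda>\<xi>. bnorm \<xi> g) \<in> borel_measurable \<mu>" for g
    by (rule borel_measurable_bnorm[OF space sets])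
  have c_int: "integrable \<mu> (\<lambda>\<xi>. log b (chordal_deriv f \<xi>))" using assms(10) by (simp add: b_def)
  then have [measurable]: "(\<lambda>\<xi>. log b (chordal_deriv f \<xi>)) \<in> borel_measurable \<mu>"
    by (rule borel_measurable_integrable)
  have h_int: "integrable \<mu> h" unfolding h_def
    using integrable_log_plus_bnorm_X[OF assms(1,5) b _ space sets assms(9) c_int] by simp
  have h_F: "h (berk_map f \<xi>) = log_plus b (bnorm \<xi> f)" for \<xi> by (simp add: h_def bnorm_berk_map_X)
  have "berk_map f \<in> space \<mu> \<rightarrow> space \<mu>" by (simp add: space berk_map_berkP1)
  note invariance = invariant_measure_integral[OF assms(7) this _ _ h_int, unfolded h_F]
  have "AE \<xi> in \<mu>. log b (bnorm \<xi> (pderiv f))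
      = log b (chordal_deriv f \<xi>) - 2 * h \<xi> + 2 * log_plus b (bnorm \<xi> f)"
    using assms(9) by eventually_elim (simp add: log_chordal_deriv_eq[OF b] h_def)
  then have "(\<integral>\<xi>. log b (bnorm \<xi> (pderiv f)) \<partial>\<mu>)
      = (\<integral>\<xi>. log b (chordal_deriv f \<xi>) - 2 * h \<xi> + 2 * log_plus b (bnorm \<xi> f) \<partial>\<mu>)"
    unfolding h_def by (rule integral_cong_AE[rotated 2]) measurable
  also have "\<dots> = (\<integral>\<xi>. log b (chordal_deriv f \<xi>) \<partial>\<mu>)"
    using c_int h_int invariance by simp
  finally show ?thesis by (simp add: b_def)
qed

end
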